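(* Let $A,B\in\mathbb{R}^{n\times n}$, let $\phi,\psi:\mathbb{R}^n\to\mathbb{R}^n$, and let $\Omega$ be a positive diagonal matrix. Assume there are constants $L_1,L_2>0$ with $\|\phi(u)-\phi(v)\|\le L_1\|u-v\|$ and $\|\psi(u)-\psi(v)\|\le L_2\|u-v\|$ for all $u,v\in\mathbb{R}^n$. Let $A+\Omega B=M-N$ with $M$ nonsingular, and set $$\alpha=\|M^{-1}\|,\quad \beta=\|N\|+L_1+L_2\|\Omega\|,\quad \gamma=\|A-\Omega B\|+L_1+L_2\|\Omega\|.$$ Suppose the VNCP has a solution $x^*$. If $$\alpha(\beta+\gamma)<1\quad\text{and}\quad 0<\tau<\frac{2(1-\alpha\beta)}{1-\alpha\beta+\alpha\gamma},$$ then for every initial pair $(x^0,y^0)\in\mathbb{R}^n\times\mathbb{R}^n$ the sequence $\{x^k\}$ generated by the FPI method converges to $x^*$, and $x^*$ is the unique solution of the VNCP.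
   Context: The vertical nonlinear complementarity problem (VNCP) is: find $x\in\mathbb{R}^n$ such that $u(x):=Ax+\phi(x)\ge 0$, $v(x):=Bx+\psi(x)\ge0$ and $u(x)^Tv(x)=0$ (inequalities componentwise), where $\phi,\psi$ act componentwise, i.e. $(\phi(x))_i=\phi(x_i)$, $(\psi(x))_i=\psi(x_i)$ for scalar functions $\phi,\psi$. For a positive diagonal $\Omega$, $x$ solves the VNCP iff $(A+\Omega B)x=|(A-\Omega B)x+\phi(x)-\Omega\psi(x)|-\phi(x)-\Omega\psi(x)$, where $|\cdot|$ is the componentwise absolute value. The FPI method, with splitting $A+\Omega B=M-N$ ($M$ nonsingular) and parameter $\tau>0$, generates from $(x^0,y^0)$: $$x^{k+1}=M^{-1}\big[Nx^k+y^k-\phi(x^k)-\Omega\psi(x^k)\big],\qquad y^{k+1}=(1-\tau)y^k+\tau\,\big|(A-\Omega B)x^{k+1}+\phi(x^{k+1})-\Omega\psi(x^{k+1})\big|.$$ $\|\cdot\|$ denotes the Euclidean vector norm and the induced spectral matrix norm. *)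

theory Defs
  imports "HOL-Analysis.Analysis"
begin

definition cw :: "(real \<Rightarrow> real) \<Rightarrow> real^'n \<Rightarrow> real^'n" where
  "cw f x = (\<chi> i. f (x $ i))"

definition vabs :: "real^'n \<Rightarrow> real^'n" where
  "vabs x = (\<chi> i. \<bar>x $ i\<bar>)"

definition mnorm :: "real^'n^'m \<Rightarrow> real" where
  "mnorm A = onorm (\<lambda>x. A *v x)"

definition pos_diag :: "real^'n^'n \<Rightarrow> bool" where
  "pos_diag W \<longleftrightarrow> (\<forall>i j. i \<noteq> j \<longrightarrow> W $ i $ j = 0) \<and> (\<forall>i. W $ i $ i > 0)"

definition vncp_sol ::
  "real^'n^'n \<Rightarrow> real^'n^'n \<Rightarrow> (real \<Rightarrow> real) \<Rightarrow> (real \<Rightarrow> real) \<Rightarrow> real^'n \<Rightarrow> bool" where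
  "vncp_sol A B phi psi x \<longleftrightarrow>
     (\<forall>i. (A *v x + cw phi x) $ i \<ge> 0) \<and>
     (\<forall>i. (B *v x + cw psi x) $ i \<ge> 0) \<and>
     (A *v x + cw phi x) \<bullet> (B *v x + cw psi x) = 0"

definition fpi_seq ::
  "real^'n^'n \<Rightarrow> real^'n^'n \<Rightarrow> (real \<Rightarrow> real) \<Rightarrow> (real \<Rightarrow> real) \<Rightarrow> real^'n^'n
   \<Rightarrow> real^'n^'n \<Rightarrow> real^'n^'n \<Rightarrow> real \<Rightarrow> (nat \<Rightarrow> real^'n) \<Rightarrow> (nat \<Rightarrow> real^'n) \<Rightarrow> bool" where
  "fpi_seq A B phi psi W M N \<tau> x y \<longleftrightarrow>
     (\<forall>k. x (Suc k) = matrix_inv M *v (N *v x k + y k - cw phi (x k) - W *v cw psi (x k)) \<and>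
          y (Suc k) = (1 - \<tau>) *\<^sub>R y k
             + \<tau> *\<^sub>R vabs ((A - W ** B) *v x (Suc k) + cw phi (x (Suc k)) - W *v cw psi (x (Suc k))))"

end

theory Submission
  imports Defs
begin

text \<open>A solution x* of the VNCP is a fixed point of the FPI map together with
  y* = |(A - \<Omega>B)x* + \<phi>(x*) - \<Omega>\<psi>(x*)|, by the modulus reformulation. Measuring the errors
  e k = \<parallel>x k - x*\<parallel> and f k = \<parallel>y k - y*\<parallel>, the Lipschitz bounds give
  e (k+1) \<le> \<alpha>\<beta> e k + \<alpha> f k  and  f (k+1) \<le> \<bar>1 - \<tau>\<bar> f k + \<tau>\<gamma> e (k+1),
  a coupled linear recurrence whose nonnegative 2x2 iteration matrix has spectral radius
  below 1 under the conditions on \<alpha>, \<beta>, \<gamma>, \<tau>, so a suitably weighted sum of e and f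
  decays geometrically. Uniqueness follows because any other solution
  yields a constant FPI sequence, which must converge to x*.\<close>

lemma norm_mult_vec_le_mnorm: "norm (A *v x) \<le> mnorm A * norm (x :: real^'n)"
  unfolding mnorm_def by (rule onorm) simp

lemma mnorm_nonneg: "0 \<le> mnorm (A :: real^'n^'m)"
  unfolding mnorm_def by (rule onorm_pos_le) simp

lemma norm_vabs_diff_le: "norm (vabs u - vabs v) \<le> norm (u - v :: real^'n)"
  by (rule norm_le_componentwise_cart) (simp add: vabs_def abs_triangle_ineq3)

lemma matrix_inv_left: "invertible (M :: real^'n^'n) \<Longrightarrow> matrix_inv M ** M = mat 1"
  unfolding invertible_def matrix_inv_def by (rule someI2_ex) auto

lemma norm_diff3_le: "norm (a + b - c) \<le> norm a + norm b + norm (c :: 'a :: real_normed_vector)"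
  using norm_triangle_ineq4[of "a + b" c] norm_triangle_ineq[of a b] by linarith

lemma norm_diff4_le:
  "norm (a + b - c - d) \<le> norm a + norm b + norm c + norm (d :: 'a :: real_normed_vector)"
  using norm_triangle_ineq4[of "a + b - c" d] norm_diff3_le[of a b c] by linarith

lemma le_power_mult_if_contracting:
  fixes V :: "nat \<Rightarrow> real"
  assumes "0 \<le> \<rho>" and "\<And>k. V (Suc k) \<le> \<rho> * V k"
  shows "V k \<le> \<rho> ^ k * V 0"
proof (induction k)
  case (Suc k)
  have "V (Suc k) \<le> \<rho> * V k" by (rule assms(2))
  also have "\<dots> \<le> \<rho> * (\<rho> ^ k * V 0)" using Suc assms(1) by (rule mult_left_mono)
  finally show ?case by simp
qed simp

lemma coupled_contraction_weight:
  fixes p q r s :: real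
  assumes "0 \<le> q * r" and "p < 1" and "q * r < (1 - p) * (1 - s)"
  obtains l where "0 < l" and "q * r < l * (1 - p)" and "l + s < 1"
proof
  define t where "t = q * r / (1 - p)"
  have "0 \<le> t" and "t < 1 - s"
    using assms unfolding t_def by (simp_all add: divide_less_eq mult.commute)
  then show "0 < (t + (1 - s)) / 2" and "(t + (1 - s)) / 2 + s < 1" by (simp_all add: field_simps)
  have "(t + (1 - s)) / 2 * (1 - p) = (q * r + (1 - s) * (1 - p)) / 2"
    using assms(2) unfolding t_def by (simp add: field_simps)
  then show "q * r < (t + (1 - s)) / 2 * (1 - p)" using assms(3) by (simp add: mult.commute)
qed

text \<open>The weighted sum l a + q b is a Lyapunov function for the recurrence: the weight l
  from the previous lemma makes it contract by the factor max (p + q r / l) (l + s) < 1.\<close>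

lemma coupled_recurrence_tendsto_zero:
  fixes a b :: "nat \<Rightarrow> real" and p q r s :: real
  assumes a_nonneg: "\<And>k. 0 \<le> a k" and b_nonneg: "\<And>k. 0 \<le> b k"
    and "0 \<le> p" "0 \<le> q" "0 \<le> r" "0 \<le> s" "p < 1" and det: "q * r < (1 - p) * (1 - s)"
    and rec_a: "\<And>k. a (Suc k) \<le> p * a k + q * b k"
    and rec_b: "\<And>k. b (Suc k) \<le> r * a k + s * b k"
  shows "a \<longlonglongrightarrow> 0"
proof -
  obtain l where l: "0 < l" "q * r < l * (1 - p)" "l + s < 1"
    using coupled_contraction_weight[OF _ \<open>p < 1\<close> det] \<open>0 \<le> q\<close> \<open>0 \<le> r\<close> by auto
  define \<rho> where "\<rho> = max (p + q * r / l) (l + s)"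
  have "q * r / l < 1 - p" using l by (simp add: divide_less_eq mult.commute)
  then have "\<rho> < 1" and "0 \<le> \<rho>" using l \<open>0 \<le> s\<close> unfolding \<rho>_def by auto
  define V where "V k = l * a k + q * b k" for k
  have "V (Suc k) \<le> \<rho> * V k" for k
  proof -
    have "V (Suc k) \<le> l * (p * a k + q * b k) + q * (r * a k + s * b k)"
      unfolding V_def using rec_a[of k] rec_b[of k] l \<open>0 \<le> q\<close>
      by (intro add_mono mult_left_mono) auto
    also have "\<dots> = (p + q * r / l) * (l * a k) + (l + s) * (q * b k)"
      using l by (simp add: field_simps)
    also have "\<dots> \<le> \<rho> * (l * a k) + \<rho> * (q * b k)"
      unfolding \<rho>_def using l a_nonneg[of k] b_nonneg[of k] \<open>0 \<le> q\<close>
      by (intro add_mono mult_right_mono) auto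
    finally show ?thesis unfolding V_def by (simp add: algebra_simps)
  qed
  then have V_le: "V k \<le> \<rho> ^ k * V 0" for k
    using le_power_mult_if_contracting \<open>0 \<le> \<rho>\<close> by blast
  have lim: "(\<lambda>k. \<rho> ^ k * V 0 / l) \<longlonglongrightarrow> 0"
    using \<open>0 \<le> \<rho>\<close> \<open>\<rho> < 1\<close> by (intro tendsto_divide_zero tendsto_mult_left_zero LIMSEQ_power_zero) simp
  have "\<forall>k. norm (a k) \<le> \<rho> ^ k * V 0 / l"
  proof
    fix k
    have "0 \<le> q * b k" using \<open>0 \<le> q\<close> b_nonneg[of k] by simp
    then have "l * a k \<le> \<rho> ^ k * V 0" using V_le[of k] unfolding V_def by linarith
    then show "norm (a k) \<le> \<rho> ^ k * V 0 / l"
      using a_nonneg[of k] l by (simp add: le_divide_eq mult.commute)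
  qed
  from Lim_null_comparison[OF always_eventually[OF this] lim] show ?thesis .
qed

text \<open>The condition q r < (1 - p)(1 - s) for the FPI error recurrence; the upper bound on
  \<tau> matters only when \<tau> > 1.\<close>

lemma relaxation_det_pos:
  fixes P G \<tau> :: real
  assumes "0 \<le> P" "0 \<le> G" "P + G < 1" "0 < \<tau>" "\<tau> < 2 * (1 - P) / (1 - P + G)"
  shows "\<tau> * G * P < (1 - P) * (1 - (\<bar>1 - \<tau>\<bar> + \<tau> * G))"
proof (cases "\<tau> \<le> 1")
  case True
  have "G * P < (1 - P) * (1 - G)" using assms(3) by (simp add: algebra_simps)
  then have "\<tau> * (G * P) < \<tau> * ((1 - P) * (1 - G))" using \<open>0 < \<tau>\<close> by simp
  then show ?thesis using True by (simp add: algebra_simps)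
next
  case False
  have "\<tau> * (1 - P + G) < 2 * (1 - P)" using assms by (simp add: less_divide_eq)
  then show ?thesis using False by (simp add: algebra_simps)
qed

definition modulus_arg ::
  "real^'n^'n \<Rightarrow> real^'n^'n \<Rightarrow> real^'n^'n \<Rightarrow> (real \<Rightarrow> real) \<Rightarrow> (real \<Rightarrow> real) \<Rightarrow> real^'n \<Rightarrow> real^'n"
  where "modulus_arg A B W phi psi x = (A - W ** B) *v x + cw phi x - W *v cw psi x"

lemma fpi_seq_iff:
  "fpi_seq A B phi psi W M N \<tau> x y \<longleftrightarrow>
     (\<forall>k. x (Suc k) = matrix_inv M *v (N *v x k + y k - cw phi (x k) - W *v cw psi (x k)) \<and>
          y (Suc k) = (1 - \<tau>) *\<^sub>R y k + \<tau> *\<^sub>R vabs (modulus_arg A B W phi psi (x (Suc k))))"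
  unfolding fpi_seq_def modulus_arg_def ..

lemma pos_diag_mult_vec_nth:
  assumes "pos_diag W"
  shows "(W *v v) $ i = W $ i $ i * v $ i"
proof -
  have "(W *v v) $ i = (\<Sum>j\<in>UNIV. W $ i $ j * v $ j)" by (simp add: matrix_vector_mult_def)
  also have "\<dots> = (\<Sum>j\<in>UNIV. if j = i then W $ i $ i * v $ i else 0)"
    using assms unfolding pos_diag_def by (intro sum.cong) auto
  finally show ?thesis by simp
qed

lemma vncp_sol_complementary:
  assumes "vncp_sol A B phi psi z"
  shows "(A *v z + cw phi z) $ i * (B *v z + cw psi z) $ i = 0"
proof -
  have "\<forall>j\<in>UNIV. (A *v z + cw phi z) $ j * (B *v z + cw psi z) $ j = 0"
    using assms unfolding vncp_sol_def inner_vec_def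
    by (subst sum_nonneg_eq_0_iff[symmetric]) auto
  then show ?thesis by simp
qed

text \<open>With u = Az + \<phi>(z) and v = Bz + \<psi>(z), complementarity forces |u - \<Omega>v| = u + \<Omega>v
  componentwise, since \<Omega> is positive diagonal.\<close>

lemma vncp_sol_vabs_modulus_arg:
  fixes A B W :: "real^'n^'n"
  assumes W: "pos_diag W" and sol: "vncp_sol A B phi psi z"
  shows "vabs (modulus_arg A B W phi psi z) = (A + W ** B) *v z + cw phi z + W *v cw psi z"
proof -
  define u where "u = A *v z + cw phi z"
  define v where "v = B *v z + cw psi z"
  have "vabs (u - W *v v) = u + W *v v"
  proof (subst vec_eq_iff, intro allI)
    fix i
    have "0 \<le> u $ i" "0 \<le> v $ i" "u $ i * v $ i = 0" "0 < W $ i $ i"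
      using sol vncp_sol_complementary[OF sol, of i] W
      unfolding vncp_sol_def pos_diag_def u_def v_def by auto
    then show "vabs (u - W *v v) $ i = (u + W *v v) $ i"
      by (auto simp: vabs_def pos_diag_mult_vec_nth[OF W])
  qed
  then show ?thesis
    unfolding modulus_arg_def u_def v_def
    by (simp add: matrix_vector_mult_diff_rdistrib matrix_vector_mult_add_rdistrib
        matrix_vector_mul_assoc[symmetric] matrix_vector_right_distrib algebra_simps)
qed

lemma vncp_sol_fpi_fixed_point:
  fixes A B M N W :: "real^'n^'n"
  assumes W: "pos_diag W" and sol: "vncp_sol A B phi psi z"
    and split: "A + W ** B = M - N" and Minv: "invertible M"
  shows "matrix_inv M *v (N *v z + vabs (modulus_arg A B W phi psi z) - cw phi z - W *v cw psi z) = z"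
proof -
  have "N *v z + vabs (modulus_arg A B W phi psi z) - cw phi z - W *v cw psi z = M *v z"
    unfolding vncp_sol_vabs_modulus_arg[OF W sol] split
    by (simp add: matrix_vector_mult_diff_rdistrib)
  then show ?thesis
    by (simp add: matrix_vector_mul_assoc matrix_inv_left[OF Minv])
qed

context
  fixes A B W M N :: "real^'n^'n" and phi psi :: "real \<Rightarrow> real" and L1 L2 :: real
  assumes lip_phi: "\<And>u v :: real^'n. norm (cw phi u - cw phi v) \<le> L1 * norm (u - v)"
    and lip_psi: "\<And>u v :: real^'n. norm (cw psi u - cw psi v) \<le> L2 * norm (u - v)"
begin

lemma norm_mult_psi_diff_le:
  "norm (W *v (cw psi u - cw psi v)) \<le> L2 * mnorm W * norm (u - v)"
  using order_trans[OF norm_mult_vec_le_mnorm mult_left_mono[OF lip_psi mnorm_nonneg]]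
  by (simp add: algebra_simps)

lemma norm_modulus_arg_diff_le:
  "norm (modulus_arg A B W phi psi u - modulus_arg A B W phi psi v)
     \<le> (mnorm (A - W ** B) + L1 + L2 * mnorm W) * norm (u - v)"
proof -
  have "modulus_arg A B W phi psi u - modulus_arg A B W phi psi v
      = (A - W ** B) *v (u - v) + (cw phi u - cw phi v) - W *v (cw psi u - cw psi v)"
    unfolding modulus_arg_def by (simp add: algebra_simps)
  also have "norm \<dots> \<le> mnorm (A - W ** B) * norm (u - v) + L1 * norm (u - v)
      + L2 * mnorm W * norm (u - v)"
    using norm_diff3_le[of "(A - W ** B) *v (u - v)" "cw phi u - cw phi v" "W *v (cw psi u - cw psi v)"]
      norm_mult_vec_le_mnorm[of "A - W ** B" "u - v"] lip_phi[of u v] norm_mult_psi_diff_le[of u v]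
    by linarith
  finally show ?thesis by (simp add: algebra_simps)
qed

lemma fpi_seq_error_x:
  assumes fpi: "fpi_seq A B phi psi W M N \<tau> x y"
    and fixed: "matrix_inv M *v (N *v z + yz - cw phi z - W *v cw psi z) = z"
  shows "norm (x (Suc k) - z) \<le> mnorm (matrix_inv M) * (mnorm N + L1 + L2 * mnorm W) * norm (x k - z)
           + mnorm (matrix_inv M) * norm (y k - yz)"
proof -
  define D where "D = N *v (x k - z) + (y k - yz) - (cw phi (x k) - cw phi z)
                      - W *v (cw psi (x k) - cw psi z)"
  have "x (Suc k) - z = matrix_inv M *v (N *v x k + y k - cw phi (x k) - W *v cw psi (x k))
      - matrix_inv M *v (N *v z + yz - cw phi z - W *v cw psi z)"
    using fpi fixed unfolding fpi_seq_def by simp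
  also have "\<dots> = matrix_inv M *v D"
    unfolding D_def by (simp add: algebra_simps)
  finally have "norm (x (Suc k) - z) \<le> mnorm (matrix_inv M) * norm D"
    by (simp only: norm_mult_vec_le_mnorm)
  moreover have "norm D \<le> (mnorm N + L1 + L2 * mnorm W) * norm (x k - z) + norm (y k - yz)"
    using norm_diff4_le[of "N *v (x k - z)" "y k - yz" "cw phi (x k) - cw phi z"
        "W *v (cw psi (x k) - cw psi z)"] norm_mult_vec_le_mnorm[of N "x k - z"]
      lip_phi[of "x k" z] norm_mult_psi_diff_le[of "x k" z]
    unfolding D_def distrib_right by linarith
  ultimately have "norm (x (Suc k) - z)
      \<le> mnorm (matrix_inv M) * ((mnorm N + L1 + L2 * mnorm W) * norm (x k - z) + norm (y k - yz))"
    by (meson mnorm_nonneg mult_left_mono order_trans)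
  then show ?thesis by (simp add: algebra_simps)
qed

lemma fpi_seq_error_y:
  assumes fpi: "fpi_seq A B phi psi W M N \<tau> x y"
    and yz: "yz = vabs (modulus_arg A B W phi psi z)"
  shows "norm (y (Suc k) - yz) \<le> \<bar>1 - \<tau>\<bar> * norm (y k - yz)
           + \<bar>\<tau>\<bar> * (mnorm (A - W ** B) + L1 + L2 * mnorm W) * norm (x (Suc k) - z)"
proof -
  let ?d = "vabs (modulus_arg A B W phi psi (x (Suc k))) - yz"
  have "y (Suc k) - yz = (1 - \<tau>) *\<^sub>R (y k - yz) + \<tau> *\<^sub>R ?d"
    using fpi unfolding fpi_seq_iff by (simp add: algebra_simps)
  then have "norm (y (Suc k) - yz) \<le> \<bar>1 - \<tau>\<bar> * norm (y k - yz) + \<bar>\<tau>\<bar> * norm ?d"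
    by (metis norm_scaleR norm_triangle_ineq)
  also have "norm ?d \<le> (mnorm (A - W ** B) + L1 + L2 * mnorm W) * norm (x (Suc k) - z)"
    unfolding yz using order_trans[OF norm_vabs_diff_le norm_modulus_arg_diff_le] .
  finally show ?thesis by (simp add: mult_left_mono mult.assoc)
qed

end

lemma fpi_seq_tendsto_vncp_sol:
  fixes A B M N W :: "real^'n^'n" and phi psi :: "real \<Rightarrow> real"
    and L1 L2 \<tau> \<alpha> \<beta> \<gamma> :: real
  assumes "0 < L1" "0 < L2"
    and lip_phi: "\<And>u v :: real^'n. norm (cw phi u - cw phi v) \<le> L1 * norm (u - v)"
    and lip_psi: "\<And>u v :: real^'n. norm (cw psi u - cw psi v) \<le> L2 * norm (u - v)"
    and W: "pos_diag W" and split: "A + W ** B = M - N" and Minv: "invertible M"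
    and sol: "vncp_sol A B phi psi z"
    and \<alpha>: "\<alpha> = mnorm (matrix_inv M)"
    and \<beta>: "\<beta> = mnorm N + L1 + L2 * mnorm W"
    and \<gamma>: "\<gamma> = mnorm (A - W ** B) + L1 + L2 * mnorm W"
    and cond: "\<alpha> * (\<beta> + \<gamma>) < 1"
    and "0 < \<tau>" and tau_ub: "\<tau> < 2 * (1 - \<alpha> * \<beta>) / (1 - \<alpha> * \<beta> + \<alpha> * \<gamma>)"
    and fpi: "fpi_seq A B phi psi W M N \<tau> x y"
  shows "x \<longlonglongrightarrow> z"
proof -
  define yz where "yz = vabs (modulus_arg A B W phi psi z)"
  have "0 \<le> \<alpha>" "0 \<le> \<beta>" "0 \<le> \<gamma>"
    using mnorm_nonneg[of "matrix_inv M"] mnorm_nonneg[of N] mnorm_nonneg[of W]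
      mnorm_nonneg[of "A - W ** B"] \<open>0 < L1\<close> \<open>0 < L2\<close> unfolding \<alpha> \<beta> \<gamma> by auto
  note err_x = fpi_seq_error_x[OF lip_phi lip_psi fpi
      vncp_sol_fpi_fixed_point[OF W sol split Minv, folded yz_def], folded \<alpha> \<beta>]
  note err_y = fpi_seq_error_y[OF lip_phi lip_psi fpi yz_def, folded \<gamma>]
  have err_y': "norm (y (Suc k) - yz) \<le> \<tau> * \<gamma> * \<alpha> * \<beta> * norm (x k - z)
      + (\<bar>1 - \<tau>\<bar> + \<tau> * \<gamma> * \<alpha>) * norm (y k - yz)" for k
    using err_y[of k] mult_left_mono[OF err_x[of k], of "\<tau> * \<gamma>"] \<open>0 < \<tau>\<close> \<open>0 \<le> \<gamma>\<close>
    by (simp add: algebra_simps)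
  have "\<tau> * (\<alpha> * \<gamma>) * (\<alpha> * \<beta>) < (1 - \<alpha> * \<beta>) * (1 - (\<bar>1 - \<tau>\<bar> + \<tau> * (\<alpha> * \<gamma>)))"
    using \<open>0 \<le> \<alpha>\<close> \<open>0 \<le> \<beta>\<close> \<open>0 \<le> \<gamma>\<close> cond \<open>0 < \<tau>\<close> tau_ub
    by (intro relaxation_det_pos) (simp_all add: distrib_left)
  moreover have "\<alpha> * \<beta> < 1"
    using cond mult_nonneg_nonneg[OF \<open>0 \<le> \<alpha>\<close> \<open>0 \<le> \<gamma>\<close>] by (simp add: distrib_left)
  ultimately have "(\<lambda>k. norm (x k - z)) \<longlonglongrightarrow> 0"
    using \<open>0 \<le> \<alpha>\<close> \<open>0 \<le> \<beta>\<close> \<open>0 \<le> \<gamma>\<close> \<open>0 < \<tau>\<close> err_x err_y'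
    by (intro coupled_recurrence_tendsto_zero[where b = "\<lambda>k. norm (y k - yz)"
          and p = "\<alpha> * \<beta>" and q = \<alpha> and r = "\<tau> * \<gamma> * \<alpha> * \<beta>"
          and s = "\<bar>1 - \<tau>\<bar> + \<tau> * \<gamma> * \<alpha>"])
      (simp_all add: algebra_simps)
  then show ?thesis by (simp add: LIM_zero_iff tendsto_norm_zero_iff)
qed

theorem theorem3p1:
  fixes A B M N W :: "real^'n^'n" and phi psi :: "real \<Rightarrow> real"
    and L1 L2 \<tau> :: real and xs :: "real^'n"
  assumes L1: "L1 > 0" and L2: "L2 > 0"
    and lip_phi: "\<And>u v :: real^'n. norm (cw phi u - cw phi v) \<le> L1 * norm (u - v)"
    and lip_psi: "\<And>u v :: real^'n. norm (cw psi u - cw psi v) \<le> L2 * norm (u - v)"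
    and W: "pos_diag W"
    and split: "A + W ** B = M - N" and Minv: "invertible M"
    and sol: "vncp_sol A B phi psi xs"
    and cond: "mnorm (matrix_inv M) * ((mnorm N + L1 + L2 * mnorm W) + (mnorm (A - W ** B) + L1 + L2 * mnorm W)) < 1"
    and tau_pos: "0 < \<tau>"
    and tau_ub: "\<tau> < 2 * (1 - mnorm (matrix_inv M) * (mnorm N + L1 + L2 * mnorm W)) /
                   (1 - mnorm (matrix_inv M) * (mnorm N + L1 + L2 * mnorm W)
                    + mnorm (matrix_inv M) * (mnorm (A - W ** B) + L1 + L2 * mnorm W))"
  shows "(\<forall>x y. fpi_seq A B phi psi W M N \<tau> x y \<longrightarrow> x \<longlonglongrightarrow> xs)
         \<and> (\<forall>z. vncp_sol A B phi psi z \<longrightarrow> z = xs)"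
proof (intro conjI allI impI)
  show conv: "x \<longlonglongrightarrow> xs" if "fpi_seq A B phi psi W M N \<tau> x y" for x y
    by (rule fpi_seq_tendsto_vncp_sol[OF L1 L2 lip_phi lip_psi W split Minv sol
          refl refl refl cond tau_pos tau_ub that])
  fix z assume "vncp_sol A B phi psi z"
  then have "fpi_seq A B phi psi W M N \<tau> (\<lambda>_. z) (\<lambda>_. vabs (modulus_arg A B W phi psi z))"
    using vncp_sol_fpi_fixed_point[OF W _ split Minv] unfolding fpi_seq_iff
    by (simp add: algebra_simps)
  then show "z = xs" using conv LIMSEQ_unique[OF tendsto_const] by blast
qed

end
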